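(* Let $G$ be a cubic graph of order $2n$ and let $m$ be a positive integer. If $m<\left\lceil \frac{3n}{4}\right\rceil$, then $\chi'_{[m]}(G)=\left\lceil \frac{3n}{m}\right\rceil$.
   Context: All graphs are finite, simple (no loops, no parallel edges), connected and cubic (3-regular). For a positive integer $m$, an $[m]$-matching of $G$ is a matching of $G$ with exactly $m$ edges. The excessive $[m]$-index $\chi'_{[m]}(G)$ is the minimum number of $[m]$-matchings of $G$ whose union is $E(G)$ (a covering of $E(G)$ by $[m]$-matchings); if some edge of $G$ lies in no $[m]$-matching, one sets $\chi'_{[m]}(G)=\infty$. *)

theory Defs
  imports Main "HOL-Library.Extended_Nat"
begin

definition simple_graph :: "'a set \<Rightarrow> 'a set set \<Rightarrow> bool" where
  "simple_graph V E \<longleftrightarrow> finite V \<and> (\<forall>e\<in>E. \<exists>u v. u \<noteq> v \<and> u \<in> V \<and> v \<in> V \<and> e = {u, v})"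

definition degree :: "'a set set \<Rightarrow> 'a \<Rightarrow> nat" where
  "degree E v = card {e\<in>E. v \<in> e}"

definition cubic :: "'a set \<Rightarrow> 'a set set \<Rightarrow> bool" where
  "cubic V E \<longleftrightarrow> (\<forall>v\<in>V. degree E v = 3)"

definition adj :: "'a set set \<Rightarrow> 'a \<Rightarrow> 'a \<Rightarrow> bool" where
  "adj E u v \<longleftrightarrow> {u, v} \<in> E"

definition connected_graph :: "'a set \<Rightarrow> 'a set set \<Rightarrow> bool" where
  "connected_graph V E \<longleftrightarrow> V \<noteq> {} \<and> (\<forall>u\<in>V. \<forall>v\<in>V. (adj E)\<^sup>*\<^sup>* u v)"

definition matching :: "'a set set \<Rightarrow> 'a set set \<Rightarrow> bool" where
  "matching E M \<longleftrightarrow> M \<subseteq> E \<and> (\<forall>e\<in>M. \<forall>f\<in>M. e \<noteq> f \<longrightarrow> e \<inter> f = {})"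

definition m_matching :: "'a set set \<Rightarrow> nat \<Rightarrow> 'a set set \<Rightarrow> bool" where
  "m_matching E m M \<longleftrightarrow> matching E M \<and> card M = m"

definition excessive_index :: "'a set set \<Rightarrow> nat \<Rightarrow> enat" where
  "excessive_index E m =
    (if \<exists>e\<in>E. \<not> (\<exists>M. m_matching E m M \<and> e \<in> M) then \<infinity>
     else enat (LEAST k. \<exists>\<F>. finite \<F> \<and> card \<F> = k \<and> (\<forall>M\<in>\<F>. m_matching E m M) \<and> \<Union>\<F> = E))"

end

theory Submission
  imports Defs
begin

text \<open>A cubic graph on \<open>2n\<close> vertices has \<open>3n\<close> edges, and \<open>k\<close> matchings of size \<open>m\<close> cover at most
  \<open>k m\<close> of them, which gives the lower bound \<open>q = \<lceil>3n / m\<rceil>\<close>. For the upper bound, properly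
  4-edge-colour the graph (Vizing's theorem for maximum degree 3). A largest colour class has at least
  \<open>3n / 4 > m\<close> edges; add copies of \<open>q m - 3n < m\<close> of its edges in a fifth colour. The resulting
  \<open>q m\<close> edge copies are properly \<open>q\<close>-coloured, and Kempe-chain swaps balance the colour classes to
  exactly \<open>m\<close> copies each. Two copies of one edge are adjacent, so every class is an \<open>m\<close>-matching.\<close>

section \<open>Pendant vertices of edge families\<close>

text \<open>Edges are indices \<open>i\<close> with endpoint set \<open>en i\<close>, so that an edge may occur in several
  copies; the covering construction colours such copies.\<close>

definition adjacent :: "('i \<Rightarrow> 'a set) \<Rightarrow> 'i \<Rightarrow> 'i \<Rightarrow> bool" where
  "adjacent en i j \<longleftrightarrow> i \<noteq> j \<and> en i \<inter> en j \<noteq> {}"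

definition linked :: "('i \<Rightarrow> 'a set) \<Rightarrow> 'i set \<Rightarrow> bool" where
  "linked en K \<longleftrightarrow> (\<forall>i\<in>K. \<forall>j\<in>K. (\<lambda>i j. i \<in> K \<and> j \<in> K \<and> adjacent en i j)\<^sup>*\<^sup>* i j)"

definition degree_in :: "('i \<Rightarrow> 'a set) \<Rightarrow> 'i set \<Rightarrow> 'a \<Rightarrow> nat" where
  "degree_in en K v = card {i\<in>K. v \<in> en i}"

definition pendant :: "('i \<Rightarrow> 'a set) \<Rightarrow> 'i set \<Rightarrow> 'a set" where
  "pendant en K = {v. degree_in en K v = 1}"

lemma adjacent_sym: "adjacent en i j \<Longrightarrow> adjacent en j i"
  by (auto simp: adjacent_def)

lemma linked_Diff_edge_with_unique_neighbour:
  assumes "linked en K" and "f \<in> K" and "\<And>j. j \<in> K \<Longrightarrow> adjacent en f j \<Longrightarrow> j = g"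
  shows "linked en (K - {f})"
  unfolding linked_def
proof (intro ballI)
  let ?R = "\<lambda>K i j. i \<in> K \<and> j \<in> K \<and> adjacent en i j"
  fix i j assume i: "i \<in> K - {f}" and j: "j \<in> K - {f}"
  have "(?R K)\<^sup>*\<^sup>* i j" using assms(1) i j by (auto simp: linked_def)
  \<comment> \<open>a path through \<open>f\<close> enters and leaves it via \<open>g\<close>\<close>
  then have "(if j = f then (?R (K - {f}))\<^sup>*\<^sup>* i g else (?R (K - {f}))\<^sup>*\<^sup>* i j)"
  proof (induction rule: rtranclp_induct)
    case base
    then show ?case using i by simp
  next
    case (step h h')
    then have h: "h \<in> K" "h' \<in> K" "adjacent en h h'" by auto
    show ?case
    proof (cases "h = f")
      case True
      then show ?thesis using step.IH h assms(3) by (auto simp: adjacent_def)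
    next
      case False
      show ?thesis
      proof (cases "h' = f")
        case True
        then have "h = g" using h assms(3) adjacent_sym by metis
        then show ?thesis using step.IH False True by simp
      next
        case False
        then have "?R (K - {f}) h h'" using h \<open>h \<noteq> f\<close> by blast
        then show ?thesis using step.IH \<open>h \<noteq> f\<close> False by (auto intro: rtranclp.rtrancl_into_rtrancl)
      qed
    qed
  qed
  then show "(?R (K - {f}))\<^sup>*\<^sup>* i j" using j by simp
qed

lemma degree_in_mono: "finite K \<Longrightarrow> K' \<subseteq> K \<Longrightarrow> degree_in en K' v \<le> degree_in en K v"
  unfolding degree_in_def by (intro card_mono) auto

lemma sum_card_endpoints_eq_sum_degree:
  assumes "finite S" "finite W" "\<And>i. i \<in> S \<Longrightarrow> en i \<subseteq> W"
  shows "(\<Sum>i\<in>S. card (en i)) = (\<Sum>v\<in>W. card {i\<in>S. v \<in> en i})"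
proof -
  have "(\<Sum>i\<in>S. card (en i)) = (\<Sum>i\<in>S. card {v\<in>W. v \<in> en i})"
    using assms(3) by (intro sum.cong refl arg_cong[where f = card]) auto
  also have "\<dots> = (\<Sum>v\<in>W. card {i\<in>S. v \<in> en i})" using assms(1,2) by (rule sum_multicount_gen) simp
  finally show ?thesis .
qed

lemma pendant_subset_endpoints: "pendant en K \<subseteq> \<Union> (en ` K)"
proof
  fix v assume "v \<in> pendant en K"
  then have "card {i\<in>K. v \<in> en i} = 1" by (simp add: pendant_def degree_in_def)
  then obtain i where "{i\<in>K. v \<in> en i} = {i}" by (rule card_1_singletonE)
  then show "v \<in> \<Union> (en ` K)" by blast
qed

lemma finite_pendant:
  assumes "finite K" "\<And>i. i \<in> K \<Longrightarrow> finite (en i)"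
  shows "finite (pendant en K)"
  using assms by (intro finite_subset[OF pendant_subset_endpoints]) auto

lemma card_pendant_Diff_edge_le:
  assumes "finite K" and "\<And>i. i \<in> K \<Longrightarrow> finite (en i)"
    and "f \<in> K" "en f = {x, y}" and y: "{i\<in>K. y \<in> en i} = {f, g}" "g \<noteq> f"
  shows "card (pendant en K) \<le> card (pendant en (K - {f}))"
proof -
  let ?P = "pendant en (K - {f})"
  have fin: "finite ?P" using assms(1,2) by (intro finite_pendant) auto
  have "{i\<in>K - {f}. y \<in> en i} = {g}" using y by auto
  then have yP: "y \<in> ?P" by (simp add: pendant_def degree_in_def)
  have "pendant en K \<subseteq> insert x (?P - {y})"
  proof
    fix v assume v: "v \<in> pendant en K"
    have "v \<noteq> y" using v y by (auto simp: pendant_def degree_in_def)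
    moreover have "v \<noteq> x \<Longrightarrow> {i\<in>K - {f}. v \<in> en i} = {i\<in>K. v \<in> en i}"
      using assms(4) \<open>v \<noteq> y\<close> by auto
    ultimately have "v \<noteq> x \<Longrightarrow> v \<in> ?P" using v by (simp add: pendant_def degree_in_def)
    then show "v \<in> insert x (?P - {y})" using \<open>v \<noteq> y\<close> by blast
  qed
  then have "card (pendant en K) \<le> card (insert x (?P - {y}))" using fin by (intro card_mono) auto
  also have "\<dots> \<le> Suc (card (?P - {y}))" using fin by (simp add: card_insert_if)
  also have "\<dots> = card ?P" using fin yP by (metis card_Diff1_less card_Suc_Diff1 lessI)
  finally show ?thesis .
qed

text \<open>All neighbours of a pendant edge \<open>f = {x, y}\<close> meet it in \<open>y\<close>, whose degree is at most 2.\<close>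

lemma pendant_edge_unique_neighbour:
  assumes "finite K" and "\<And>v. degree_in en K v \<le> 2" and "linked en K"
    and x: "{i\<in>K. x \<in> en i} = {f}" and "en f = {x, y}" and "K \<noteq> {f}"
  obtains g where "{i\<in>K. y \<in> en i} = {f, g}" "g \<noteq> f" "\<And>j. j \<in> K \<Longrightarrow> adjacent en f j \<Longrightarrow> j = g"
proof -
  have "f \<in> K" using x by auto
  then obtain h where "h \<in> K" "h \<noteq> f" using assms(6) by blast
  then have "(\<lambda>i j. i \<in> K \<and> j \<in> K \<and> adjacent en i j)\<^sup>*\<^sup>* f h"
    using assms(3) \<open>f \<in> K\<close> by (simp add: linked_def)
  then obtain g where g: "g \<in> K" "adjacent en f g"
    using \<open>h \<noteq> f\<close> by (cases rule: converse_rtranclpE) auto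
  have nb: "j \<in> {i\<in>K. y \<in> en i} - {f}" if "j \<in> K" "adjacent en f j" for j
    using that x assms(5) by (auto simp: adjacent_def)
  have "{f, g} \<subseteq> {i\<in>K. y \<in> en i}" using nb[OF g] \<open>f \<in> K\<close> assms(5) by auto
  moreover have "card {i\<in>K. y \<in> en i} \<le> 2" using assms(2) by (simp add: degree_in_def)
  moreover have "g \<noteq> f" using g by (auto simp: adjacent_def)
  ultimately have "{i\<in>K. y \<in> en i} = {f, g}" using assms(1) by (intro card_seteq[symmetric]) auto
  then show ?thesis using that \<open>g \<noteq> f\<close> nb by blast
qed

text \<open>A linked edge set of maximum degree 2 is a path or a cycle.\<close>

lemma card_pendant_le_2:
  assumes "finite K" and "\<And>i. i \<in> K \<Longrightarrow> card (en i) = 2" and "\<And>v. degree_in en K v \<le> 2"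
    and "linked en K"
  shows "card (pendant en K) \<le> 2"
  using assms
proof (induction K rule: finite_psubset_induct)
  case (psubset K)
  note two = psubset.prems(1) and deg = psubset.prems(2) and lk = psubset.prems(3)
  have fins: "finite (en i)" if "i \<in> K" for i using two[OF that] by (metis card.infinite zero_neq_numeral)
  show ?case
  proof (cases "pendant en K = {}")
    case False
    then obtain x where "x \<in> pendant en K" by blast
    then have "card {i\<in>K. x \<in> en i} = 1" by (simp add: pendant_def degree_in_def)
    then obtain f where xf: "{i\<in>K. x \<in> en i} = {f}" by (rule card_1_singletonE)
    then have f: "f \<in> K" "x \<in> en f" by auto
    then obtain y where exy: "en f = {x, y}" "x \<noteq> y"
      using two[OF f(1)] by (metis card_2_iff doubleton_eq_iff insertE singletonD)
    show ?thesis
    proof (cases "K = {f}")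
      case True
      have "card (pendant en K) \<le> card (en f)"
        using pendant_subset_endpoints[of en K] True exy by (intro card_mono) auto
      then show ?thesis using two f by simp
    next
      case False
      then obtain g where ey: "{i\<in>K. y \<in> en i} = {f, g}" "g \<noteq> f"
        and unique: "\<And>j. j \<in> K \<Longrightarrow> adjacent en f j \<Longrightarrow> j = g"
        using pendant_edge_unique_neighbour[OF psubset.hyps(1) deg lk xf exy(1)] by blast
      have "linked en (K - {f})" using linked_Diff_edge_with_unique_neighbour[OF lk f(1) unique] .
      moreover have "degree_in en (K - {f}) v \<le> 2" for v
        using degree_in_mono[OF psubset.hyps(1), of "K - {f}" en v] deg[of v] by simp
      ultimately have "card (pendant en (K - {f})) \<le> 2"
        using psubset.IH[of "K - {f}"] f two by auto
      then show ?thesis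
        using card_pendant_Diff_edge_le[OF psubset.hyps(1) fins f(1) exy(1) ey] by simp
    qed
  qed simp
qed

section \<open>Kempe chains\<close>

definition proper_colouring :: "('i \<Rightarrow> 'a set) \<Rightarrow> 'i set \<Rightarrow> ('i \<Rightarrow> nat) \<Rightarrow> bool" where
  "proper_colouring en X col \<longleftrightarrow> (\<forall>i\<in>X. \<forall>j\<in>X. adjacent en i j \<longrightarrow> col i \<noteq> col j)"

definition kempe_step :: "('i \<Rightarrow> 'a set) \<Rightarrow> 'i set \<Rightarrow> ('i \<Rightarrow> nat) \<Rightarrow> nat \<Rightarrow> nat \<Rightarrow> 'i \<Rightarrow> 'i \<Rightarrow> bool"
  where "kempe_step en X col a b i j \<longleftrightarrow>
    i \<in> X \<and> j \<in> X \<and> col i \<in> {a, b} \<and> col j \<in> {a, b} \<and> adjacent en i j"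

definition kempe_chain :: "('i \<Rightarrow> 'a set) \<Rightarrow> 'i set \<Rightarrow> ('i \<Rightarrow> nat) \<Rightarrow> nat \<Rightarrow> nat \<Rightarrow> 'i \<Rightarrow> 'i set"
  where "kempe_chain en X col a b i = {j. (kempe_step en X col a b)\<^sup>*\<^sup>* i j}"

definition swap_colours :: "nat \<Rightarrow> nat \<Rightarrow> nat \<Rightarrow> nat" where
  "swap_colours a b c = (if c = a then b else if c = b then a else c)"

definition kempe_swap :: "('i \<Rightarrow> nat) \<Rightarrow> 'i set \<Rightarrow> nat \<Rightarrow> nat \<Rightarrow> 'i \<Rightarrow> nat" where
  "kempe_swap col K a b i = (if i \<in> K then swap_colours a b (col i) else col i)"

lemma card_colour_class_at_vertex_le_1:
  assumes "proper_colouring en X col" "finite X"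
  shows "card {i\<in>X. col i = c \<and> v \<in> en i} \<le> 1"
proof -
  have "i = j" if "i \<in> X" "j \<in> X" "col i = col j" "v \<in> en i" "v \<in> en j" for i j
    using assms(1) that unfolding proper_colouring_def adjacent_def by blast
  then show ?thesis using assms(2) unfolding One_nat_def by (subst card_le_Suc0_iff_eq) auto
qed

lemma kempe_chain_self: "i \<in> kempe_chain en X col a b i"
  by (simp add: kempe_chain_def)

lemma kempe_chain_subset:
  assumes "i \<in> X" "col i \<in> {a, b}"
  shows "kempe_chain en X col a b i \<subseteq> {j\<in>X. col j \<in> {a, b}}"
proof
  fix j assume "j \<in> kempe_chain en X col a b i"
  then have "(kempe_step en X col a b)\<^sup>*\<^sup>* i j" by (simp add: kempe_chain_def)
  then show "j \<in> {j\<in>X. col j \<in> {a, b}}"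
    using assms by (cases rule: rtranclp.cases) (auto simp: kempe_step_def)
qed

lemma kempe_chain_closed:
  assumes "i \<in> X" "col i \<in> {a, b}" and "j \<in> kempe_chain en X col a b i"
    and "k \<in> X" "col k \<in> {a, b}" "adjacent en j k"
  shows "k \<in> kempe_chain en X col a b i"
proof -
  have "kempe_step en X col a b j k"
    using assms kempe_chain_subset[of i X col a b en] by (auto simp: kempe_step_def)
  then show ?thesis using assms(3) by (auto simp: kempe_chain_def intro: rtranclp.rtrancl_into_rtrancl)
qed

lemma symp_kempe_step: "symp (kempe_step en X col a b)"
  by (auto intro: sympI simp: kempe_step_def adjacent_sym)

lemma kempe_chain_eq:
  assumes "j \<in> kempe_chain en X col a b i"
  shows "kempe_chain en X col a b j = kempe_chain en X col a b i"
proof -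
  have ij: "(kempe_step en X col a b)\<^sup>*\<^sup>* i j" using assms by (simp add: kempe_chain_def)
  have "(kempe_step en X col a b)\<^sup>*\<^sup>* j i" by (rule sympD[OF symp_rtranclp[OF symp_kempe_step] ij])
  then show ?thesis using ij unfolding kempe_chain_def by (auto intro: rtranclp_trans)
qed

lemma linked_kempe_chain: "linked en (kempe_chain en X col a b i)"
proof -
  let ?C = "kempe_chain en X col a b i"
  let ?R = "\<lambda>j k. j \<in> ?C \<and> k \<in> ?C \<and> adjacent en j k"
  have from_i: "?R\<^sup>*\<^sup>* i j" if "j \<in> ?C" for j
  proof -
    have "(kempe_step en X col a b)\<^sup>*\<^sup>* i j" using that by (simp add: kempe_chain_def)
    then show ?thesis
    proof (induction rule: rtranclp_induct)
      case (step j k)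
      then have "?R j k" by (auto simp: kempe_chain_def kempe_step_def intro: rtranclp.rtrancl_into_rtrancl)
      with step.IH show ?case by (rule rtranclp.rtrancl_into_rtrancl)
    qed simp
  qed
  have sym: "symp ?R\<^sup>*\<^sup>*" by (rule symp_rtranclp) (auto intro: sympI simp: adjacent_sym)
  show ?thesis unfolding linked_def
  proof (intro ballI)
    fix j k assume "j \<in> ?C" "k \<in> ?C"
    then show "?R\<^sup>*\<^sup>* j k" using sympD[OF sym from_i] from_i by (blast intro: rtranclp_trans)
  qed
qed

lemma proper_colouring_kempe_swap:
  assumes pr: "proper_colouring en X col" and i0: "i0 \<in> X" "col i0 \<in> {a, b}"
  shows "proper_colouring en X (kempe_swap col (kempe_chain en X col a b i0) a b)"
proof -
  let ?K = "kempe_chain en X col a b i0"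
  have inside: "col i \<in> {a, b}" if "i \<in> ?K" for i using kempe_chain_subset[of i0 X col a b] i0 that by blast
  have outside: "col j \<notin> {a, b}" if "i \<in> ?K" "j \<in> X" "j \<notin> ?K" "adjacent en i j" for i j
    using kempe_chain_closed[of i0 X col a b] i0 that by blast
  show ?thesis
    unfolding proper_colouring_def
  proof (intro ballI impI)
    fix i j assume ij: "i \<in> X" "j \<in> X" "adjacent en i j"
    then have "col i \<noteq> col j" using pr by (simp add: proper_colouring_def)
    then show "kempe_swap col ?K a b i \<noteq> kempe_swap col ?K a b j"
      using inside outside[OF _ ij(2) _ ij(3)] outside[OF _ ij(1) _ adjacent_sym[OF ij(3)]]
      by (auto simp: kempe_swap_def swap_colours_def)
  qed
qed

lemma kempe_swap_less:
  "col i < q \<Longrightarrow> a < q \<Longrightarrow> b < q \<Longrightarrow> kempe_swap col K a b i < q"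
  by (simp add: kempe_swap_def swap_colours_def)

lemma kempe_swap_commute: "kempe_swap col K a b = kempe_swap col K b a"
  by (auto simp: kempe_swap_def swap_colours_def)

lemma kempe_swap_class_other:
  assumes "K \<subseteq> {i\<in>X. col i \<in> {a, b}}" "c \<noteq> a" "c \<noteq> b"
  shows "{i\<in>X. kempe_swap col K a b i = c} = {i\<in>X. col i = c}"
  using assms by (auto simp: kempe_swap_def swap_colours_def)

lemma card_kempe_swap_class:
  assumes "finite X" "K \<subseteq> {i\<in>X. col i \<in> {a, b}}" "a \<noteq> b"
  shows "card {i\<in>X. kempe_swap col K a b i = a} + card {i\<in>K. col i = a}
    = card {i\<in>X. col i = a} + card {i\<in>K. col i = b}"
proof -
  let ?A = "{i\<in>X. col i = a} - K"
  have finK: "finite K" using finite_subset[OF assms(2)] assms(1) by simp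
  have "{i\<in>X. kempe_swap col K a b i = a} = ?A \<union> {i\<in>K. col i = b}"
    using assms(2,3) by (auto simp: kempe_swap_def swap_colours_def)
  then have "card {i\<in>X. kempe_swap col K a b i = a} = card ?A + card {i\<in>K. col i = b}"
    using assms(1) finK by (simp add: card_Un_disjoint disjoint_iff)
  moreover have "card {i\<in>X. col i = a} = card ?A + card {i\<in>K. col i = a}"
  proof -
    have split: "{i\<in>X. col i = a} = ?A \<union> {i\<in>K. col i = a}" using assms(2) by auto
    show ?thesis using assms(1) finK by (subst (1) split) (simp add: card_Un_disjoint disjoint_iff)
  qed
  ultimately show ?thesis by simp
qed

lemma card_pendant_kempe_chain_le_2:
  assumes fin: "finite X" and two: "\<And>i. i \<in> X \<Longrightarrow> card (en i) = 2"
    and pr: "proper_colouring en X col" and i0: "i0 \<in> X" "col i0 \<in> {a, b}"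
  shows "card (pendant en (kempe_chain en X col a b i0)) \<le> 2"
proof -
  let ?C = "kempe_chain en X col a b i0"
  have CS: "?C \<subseteq> {i\<in>X. col i \<in> {a, b}}" using kempe_chain_subset[of i0 X col a b] i0 .
  have "degree_in en ?C v \<le> 2" for v
  proof -
    have "{i\<in>?C. v \<in> en i} \<subseteq> {i\<in>X. col i = a \<and> v \<in> en i} \<union> {i\<in>X. col i = b \<and> v \<in> en i}"
      using CS by auto
    then have "degree_in en ?C v \<le> card ({i\<in>X. col i = a \<and> v \<in> en i} \<union> {i\<in>X. col i = b \<and> v \<in> en i})"
      unfolding degree_in_def using fin by (intro card_mono) auto
    also have "\<dots> \<le> 1 + 1"
      using card_Un_le card_colour_class_at_vertex_le_1[OF pr fin] by (meson add_mono order_trans)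
    finally show ?thesis by simp
  qed
  then show ?thesis
    using CS two finite_subset[OF CS] fin by (intro card_pendant_le_2 linked_kempe_chain) auto
qed

lemma mem_pendant_kempe_chain:
  assumes pr: "proper_colouring en X col" and i0: "i0 \<in> X" "col i0 \<in> {a, b}"
    and f: "f \<in> kempe_chain en X col a b i0" "v \<in> en f" and no_a: "\<forall>i\<in>X. v \<in> en i \<longrightarrow> col i \<noteq> a"
  shows "v \<in> pendant en (kempe_chain en X col a b i0)"
proof -
  let ?K = "kempe_chain en X col a b i0"
  have KS: "?K \<subseteq> {i\<in>X. col i \<in> {a, b}}" using kempe_chain_subset[of i0 X col a b] i0 .
  have "g = f" if "g \<in> ?K" "v \<in> en g" for g
    using pr KS f that no_a unfolding proper_colouring_def adjacent_def by blast
  then have "{g\<in>?K. v \<in> en g} = {f}" using f by blast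
  then show ?thesis by (simp add: pendant_def degree_in_def)
qed

text \<open>Count edge ends: each vertex meets at most one edge of each colour of the chain, and a vertex
  meeting an \<open>a\<close>-edge but no \<open>b\<close>-edge is pendant; there are at most two pendant vertices.\<close>

lemma card_kempe_chain_class_le:
  assumes fin: "finite X" and two: "\<And>i. i \<in> X \<Longrightarrow> card (en i) = 2"
    and pr: "proper_colouring en X col" and i0: "i0 \<in> X" "col i0 \<in> {a, b}" and "a \<noteq> b"
  shows "card {i\<in>kempe_chain en X col a b i0. col i = a}
    \<le> card {i\<in>kempe_chain en X col a b i0. col i = b} + 1"
proof -
  define C where "C = kempe_chain en X col a b i0"
  have CS: "C \<subseteq> {i\<in>X. col i \<in> {a, b}}" unfolding C_def using kempe_chain_subset[of i0 X col a b] i0 .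
  have finC: "finite C" using finite_subset[OF CS] fin by simp
  have fins: "finite (en i)" if "i \<in> X" for i using two[OF that] by (metis card.infinite zero_neq_numeral)
  define d where "d c v = card {i\<in>C. col i = c \<and> v \<in> en i}" for c v
  have d1: "d c v \<le> 1" for c v
    using card_mono[of "{i\<in>X. col i = c \<and> v \<in> en i}" "{i\<in>C. col i = c \<and> v \<in> en i}"]
      card_colour_class_at_vertex_le_1[OF pr fin, of c v] CS fin unfolding d_def by fastforce
  have deg: "degree_in en C v = d a v + d b v" for v
  proof -
    have "{i\<in>C. v \<in> en i} = {i\<in>C. col i = a \<and> v \<in> en i} \<union> {i\<in>C. col i = b \<and> v \<in> en i}"
      using CS by auto
    then show ?thesis using finC \<open>a \<noteq> b\<close> by (simp add: degree_in_def d_def card_Un_disjoint disjoint_iff)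
  qed
  have "card (pendant en C) \<le> 2" unfolding C_def by (rule card_pendant_kempe_chain_le_2[OF fin two pr i0])
  define W where "W = \<Union> (en ` C)"
  have finW: "finite W" unfolding W_def using finC CS fins by auto
  have count: "2 * card {i\<in>C. col i = c} = (\<Sum>v\<in>W. d c v)" for c
  proof -
    have "2 * card {i\<in>C. col i = c} = (\<Sum>i\<in>{i\<in>C. col i = c}. card (en i))"
      using CS two by (subst sum.cong[OF refl, of _ _ "\<lambda>_. 2"]) auto
    also have "\<dots> = (\<Sum>v\<in>W. card {i\<in>{i\<in>C. col i = c}. v \<in> en i})"
      using finC finW by (intro sum_card_endpoints_eq_sum_degree) (auto simp: W_def)
    also have "\<dots> = (\<Sum>v\<in>W. d c v)" unfolding d_def by (intro sum.cong refl arg_cong[where f = card]) auto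
    finally show ?thesis .
  qed
  have "d a v \<le> d b v + of_bool (v \<in> pendant en C)" for v
    using d1[of a v] deg[of v] by (cases "d b v") (auto simp: pendant_def)
  then have "(\<Sum>v\<in>W. d a v) \<le> (\<Sum>v\<in>W. d b v) + card (W \<inter> pendant en C)"
    using finW sum_mono[of W "d a" "\<lambda>v. d b v + of_bool (v \<in> pendant en C)"] by (simp add: sum.distrib)
  also have "card (W \<inter> pendant en C) \<le> card (pendant en C)"
    using finite_pendant[of C en] finC CS fins by (intro card_mono) auto
  finally show ?thesis using count[of a] count[of b] \<open>card (pendant en C) \<le> 2\<close> unfolding C_def by linarith
qed

section \<open>Balancing colour classes\<close>

lemma exists_kempe_chain_with_surplus:
  assumes fin: "finite X" and less: "card {i\<in>X. col i = b} < card {i\<in>X. col i = a}"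
  obtains i0 where "i0 \<in> X" "col i0 \<in> {a, b}"
    "card {i\<in>kempe_chain en X col a b i0. col i = b} < card {i\<in>kempe_chain en X col a b i0. col i = a}"
proof (rule ccontr)
  assume no: "\<not> thesis"
  let ?S = "{i\<in>X. col i \<in> {a, b}}"
  let ?P = "kempe_chain en X col a b ` ?S"
  have chains: "K \<subseteq> ?S" if "K \<in> ?P" for K
    using that kempe_chain_subset[of _ X col a b] by blast
  have chains_disjoint: "K \<inter> K' = {}" if "K \<in> ?P" "K' \<in> ?P" "K \<noteq> K'" for K K'
    using that kempe_chain_eq[of _ en X col a b] by blast
  have class_sum: "card {i\<in>X. col i = c} = (\<Sum>K\<in>?P. card {i\<in>K. col i = c})" if "c \<in> {a, b}" for c
  proof -
    have "{i\<in>X. col i = c} = (\<Union>K\<in>?P. {i\<in>K. col i = c})"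
      using chains that kempe_chain_self[of _ en X col a b] by blast
    also have "card \<dots> = (\<Sum>K\<in>?P. card {i\<in>K. col i = c})"
    proof (rule card_UN_disjoint)
      show "finite ?P" using fin by simp
      show "\<forall>K\<in>?P. finite {i\<in>K. col i = c}" using finite_subset[OF chains] fin by auto
      show "\<forall>K\<in>?P. \<forall>K'\<in>?P. K \<noteq> K' \<longrightarrow> {i\<in>K. col i = c} \<inter> {i\<in>K'. col i = c} = {}"
        using chains_disjoint by blast
    qed
    finally show ?thesis .
  qed
  have "(\<Sum>K\<in>?P. card {i\<in>K. col i = a}) \<le> (\<Sum>K\<in>?P. card {i\<in>K. col i = b})"
  proof (rule sum_mono)
    fix K assume "K \<in> ?P"
    then obtain i0 where "i0 \<in> ?S" "K = kempe_chain en X col a b i0" by blast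
    then have "\<not> card {i\<in>K. col i = b} < card {i\<in>K. col i = a}" using that no by blast
    then show "card {i\<in>K. col i = a} \<le> card {i\<in>K. col i = b}" by simp
  qed
  then show False using class_sum[of a] class_sum[of b] less by simp
qed

lemma kempe_swap_moves_one_edge:
  assumes fin: "finite X" and two: "\<And>i. i \<in> X \<Longrightarrow> card (en i) = 2"
    and pr: "proper_colouring en X col" and bd: "\<forall>i\<in>X. col i < q" and "a < q" "b < q"
    and less: "card {i\<in>X. col i = b} < card {i\<in>X. col i = a}"
  obtains col' where "proper_colouring en X col'" "\<forall>i\<in>X. col' i < q"
    "card {i\<in>X. col' i = a} + 1 = card {i\<in>X. col i = a}"
    "card {i\<in>X. col' i = b} = card {i\<in>X. col i = b} + 1"
    "\<And>c. c \<noteq> a \<Longrightarrow> c \<noteq> b \<Longrightarrow> {i\<in>X. col' i = c} = {i\<in>X. col i = c}"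
proof -
  have "a \<noteq> b" using less by auto
  obtain i0 where i0: "i0 \<in> X" "col i0 \<in> {a, b}" and
    surplus: "card {i\<in>kempe_chain en X col a b i0. col i = b} < card {i\<in>kempe_chain en X col a b i0. col i = a}"
    using exists_kempe_chain_with_surplus[OF fin less] by blast
  define K where "K = kempe_chain en X col a b i0"
  have KS: "K \<subseteq> {i\<in>X. col i \<in> {a, b}}" unfolding K_def using kempe_chain_subset[of i0 X col a b] i0 .
  have surplus_1: "card {i\<in>K. col i = a} = card {i\<in>K. col i = b} + 1"
    using card_kempe_chain_class_le[OF fin two pr i0 \<open>a \<noteq> b\<close>] surplus unfolding K_def by simp
  show ?thesis
  proof (rule that)
    show "proper_colouring en X (kempe_swap col K a b)"
      unfolding K_def by (rule proper_colouring_kempe_swap[OF pr i0])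
    show "\<forall>i\<in>X. kempe_swap col K a b i < q" using bd \<open>a < q\<close> \<open>b < q\<close> by (simp add: kempe_swap_less)
    show "card {i\<in>X. kempe_swap col K a b i = a} + 1 = card {i\<in>X. col i = a}"
      using card_kempe_swap_class[OF fin KS \<open>a \<noteq> b\<close>] surplus_1 by simp
    have KS': "K \<subseteq> {i\<in>X. col i \<in> {b, a}}" using KS by auto
    show "card {i\<in>X. kempe_swap col K a b i = b} = card {i\<in>X. col i = b} + 1"
      using card_kempe_swap_class[OF fin KS' \<open>a \<noteq> b\<close>[symmetric]] surplus_1
      by (simp add: kempe_swap_commute[of col K a b])
    show "{i\<in>X. kempe_swap col K a b i = c} = {i\<in>X. col i = c}" if "c \<noteq> a" "c \<noteq> b" for c
      using kempe_swap_class_other[OF KS that] .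
  qed
qed

lemma sum_card_colour_classes:
  fixes col :: "'i \<Rightarrow> nat"
  assumes "finite X" and "\<forall>i\<in>X. col i < q"
  shows "(\<Sum>c<q. card {i\<in>X. col i = c}) = card X"
proof -
  have "card X = card (\<Union>c<q. {i\<in>X. col i = c})" using assms(2) by (intro arg_cong[where f = card]) auto
  also have "\<dots> = (\<Sum>c<q. card {i\<in>X. col i = c})" using assms(1) by (intro card_UN_disjoint) auto
  finally show ?thesis by simp
qed

text \<open>Balancing by Kempe swaps: while some colour is used more than \<open>m\<close> times, some other colour
  is used fewer than \<open>m\<close> times, and a swap moves one edge from the first class to the second.\<close>

lemma exists_colouring_with_small_classes:
  assumes fin: "finite X" and two: "\<And>i. i \<in> X \<Longrightarrow> card (en i) = 2" and "card X \<le> q * m"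
  shows "proper_colouring en X col \<Longrightarrow> \<forall>i\<in>X. col i < q \<Longrightarrow>
    \<exists>col'. proper_colouring en X col' \<and> (\<forall>i\<in>X. col' i < q) \<and> (\<forall>c<q. card {i\<in>X. col' i = c} \<le> m)"
proof (induction "\<Sum>c<q. card {i\<in>X. col i = c} - m" arbitrary: col rule: less_induct)
  case less
  let ?n = "\<lambda>col c. card {i\<in>X. col i = c}"
  show ?case
  proof (cases "\<forall>c<q. ?n col c \<le> m")
    case False
    then obtain a where a: "a < q" "m < ?n col a" by (auto simp: not_le)
    have "\<exists>b<q. ?n col b < m"
    proof (rule ccontr)
      assume "\<not> ?thesis"
      then have "(\<Sum>c<q. m) < (\<Sum>c<q. ?n col c)" using a by (intro sum_strict_mono_ex1) auto
      then show False using sum_card_colour_classes[OF fin less.prems(2)] \<open>card X \<le> q * m\<close> by simp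
    qed
    then obtain b where b: "b < q" "?n col b < m" by blast
    have lt: "?n col b < ?n col a" using a b by simp
    obtain col' where col': "proper_colouring en X col'" "\<forall>i\<in>X. col' i < q"
        "?n col' a + 1 = ?n col a" "?n col' b = ?n col b + 1"
        "\<And>c. c \<noteq> a \<Longrightarrow> c \<noteq> b \<Longrightarrow> {i\<in>X. col' i = c} = {i\<in>X. col i = c}"
      using kempe_swap_moves_one_edge[OF fin two less.prems a(1) b(1) lt] by blast
    have "(\<Sum>c<q. ?n col' c - m) < (\<Sum>c<q. ?n col c - m)"
    proof (rule sum_strict_mono_ex1)
      have "?n col' c - m \<le> ?n col c - m" for c
        using col'(3,4) col'(5)[of c] b(2) by (cases "c = a"; cases "c = b") auto
      then show "\<forall>c\<in>{..<q}. ?n col' c - m \<le> ?n col c - m" by blast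
      show "\<exists>c\<in>{..<q}. ?n col' c - m < ?n col c - m" using a col'(3) by (intro bexI[of _ a]) auto
    qed simp
    then show ?thesis using less.hyps col'(1,2) by blast
  qed (use less.prems in blast)
qed

section \<open>Edge colourings with four colours\<close>

lemma exists_inj_choice_greedy:
  assumes "finite N" and "\<And>x. x \<in> N \<Longrightarrow> finite (S x) \<and> card N \<le> card (S x)"
  shows "\<exists>c. inj_on c N \<and> (\<forall>x\<in>N. c x \<in> S x)"
  using assms
proof (induction N rule: finite_induct)
  case (insert y N)
  then obtain c where c: "inj_on c N" "\<forall>x\<in>N. c x \<in> S x" by force
  have "card (c ` N) < card (S y)"
    using insert card_image_le[OF insert.hyps(1), of c] by fastforce
  then have "\<not> S y \<subseteq> c ` N" using card_mono[of "c ` N" "S y"] insert.hyps(1) by auto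
  then obtain d where d: "d \<in> S y" "d \<notin> c ` N" by blast
  have "inj_on (c(y := d)) (insert y N)" using c(1) d(2) insert.hyps(2) by (auto simp: inj_on_def)
  moreover have "\<forall>x\<in>insert y N. (c(y := d)) x \<in> S x" using c(2) d(1) insert.hyps(2) by auto
  ultimately show ?case by blast
qed simp

lemma exists_distinct_pair:
  assumes "finite A" "finite B" "A \<noteq> {}" "B \<noteq> {}" "2 \<le> card (A \<union> B)"
  shows "\<exists>a\<in>A. \<exists>b\<in>B. a \<noteq> b"
proof (rule ccontr)
  assume "\<not> ?thesis"
  then have eq: "x = y" if "x \<in> A" "y \<in> B" for x y using that by blast
  obtain a b where "a \<in> A" "b \<in> B" using assms(3,4) by blast
  then have "x = b" if "x \<in> A \<union> B" for x using that eq[of _ b] eq[of a] by blast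
  then have "A \<union> B \<subseteq> {b}" by blast
  then have "card (A \<union> B) \<le> 1" using card_mono[of "{b}"] by fastforce
  then show False using assms(5) by simp
qed

lemma exists_distinct_reps_three:
  assumes "finite A" "finite B" "finite C" "2 \<le> card A" "2 \<le> card B" "2 \<le> card C" "A \<noteq> B"
  shows "\<exists>a\<in>A. \<exists>b\<in>B. \<exists>d\<in>C. a \<noteq> b \<and> a \<noteq> d \<and> b \<noteq> d"
proof -
  obtain d where d: "d \<in> C" using assms(6) by fastforce
  have "3 \<le> card (A \<union> B)"
  proof -
    have "A \<subset> A \<union> B \<or> B \<subset> A \<union> B" using assms(7) by blast
    then show ?thesis using assms(1,2,4,5) psubset_card_mono[of "A \<union> B"] by fastforce
  qed
  moreover have "card (A \<union> B) - card {d} \<le> card ((A \<union> B) - {d})" by (rule diff_card_le_card_Diff) simp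
  ultimately have "2 \<le> card ((A - {d}) \<union> (B - {d}))" by (simp add: Un_Diff)
  moreover have "Y - {d} \<noteq> {}" if "2 \<le> card Y" for Y :: "'a set"
  proof
    assume "Y - {d} = {}"
    then have "card Y \<le> 1" using card_mono[of "{d}" Y] by simp
    then show False using that by simp
  qed
  then have "A - {d} \<noteq> {}" "B - {d} \<noteq> {}" using assms(4,5) by blast+
  ultimately obtain a b where "a \<in> A - {d}" "b \<in> B - {d}" "a \<noteq> b"
    using exists_distinct_pair[of "A - {d}" "B - {d}"] assms(1,2) by blast
  then show ?thesis using d by blast
qed

text \<open>Hall's condition for three sets of size at least 2.\<close>

lemma exists_inj_choice_three:
  assumes "finite N" "card N \<le> 3" and fin: "\<And>x. x \<in> N \<Longrightarrow> finite (S x) \<and> 2 \<le> card (S x)"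
    and not_all_same_pair: "\<not> (card N = 3 \<and> (\<forall>x\<in>N. \<forall>y\<in>N. S x = S y) \<and> (\<forall>x\<in>N. card (S x) = 2))"
  shows "\<exists>c. inj_on c N \<and> (\<forall>x\<in>N. c x \<in> S x)"
proof (cases "card N \<le> 2 \<or> (\<forall>x\<in>N. card N \<le> card (S x))")
  case True
  then show ?thesis using fin \<open>finite N\<close> by (intro exists_inj_choice_greedy) (auto intro: le_trans)
next
  case False
  then have "card N = 3" using \<open>card N \<le> 3\<close> by auto
  moreover obtain x where x: "x \<in> N" "card (S x) < 3" using False \<open>card N = 3\<close> by auto
  ultimately have "\<exists>u\<in>N. \<exists>v\<in>N. S u \<noteq> S v"
    using not_all_same_pair fin[OF x(1)] by (metis less_Suc_eq_le numeral_3_eq_3 numeral_2_eq_2 le_antisym)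
  then obtain u v where uv: "u \<in> N" "v \<in> N" "S u \<noteq> S v" by blast
  then have "u \<noteq> v" by blast
  with uv have "card (N - {u, v}) = 1" using \<open>card N = 3\<close> \<open>finite N\<close> by (auto simp: card_Diff_subset)
  then obtain w where w: "N - {u, v} = {w}" by (rule card_1_singletonE)
  then have N: "N = {u, v, w}" using uv by auto
  obtain a b d where "a \<in> S u" "b \<in> S v" "d \<in> S w" "a \<noteq> b" "a \<noteq> d" "b \<noteq> d"
    using exists_distinct_reps_three[of "S u" "S v" "S w"] fin N uv(3) by auto
  then show ?thesis using w
    by (intro exI[of _ "\<lambda>t. if t = u then a else if t = v then b else d"]) (auto simp: N inj_on_def)
qed

definition missing :: "'a set set \<Rightarrow> ('a set \<Rightarrow> nat) \<Rightarrow> 'a \<Rightarrow> nat set" where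
  "missing E col x = {c. c < 4 \<and> (\<forall>f\<in>E. x \<in> f \<longrightarrow> col f \<noteq> c)}"

lemma finite_missing: "finite (missing E col x)"
  unfolding missing_def by (rule finite_subset[of _ "{..<4}"]) auto

lemma card_missing_ge_2:
  assumes "finite E" "card {f\<in>E. x \<in> f} \<le> 2"
  shows "2 \<le> card (missing E col x)"
proof -
  have "missing E col x = {..<4} - col ` {f\<in>E. x \<in> f}" unfolding missing_def by auto
  moreover have "card (col ` {f\<in>E. x \<in> f}) \<le> 2" using card_image_le[of "{f\<in>E. x \<in> f}" col] assms by simp
  moreover have "card {..<4::nat} - card (col ` {f\<in>E. x \<in> f}) \<le> card ({..<4} - col ` {f\<in>E. x \<in> f})"
    using assms(1) by (intro diff_card_le_card_Diff) simp
  ultimately show ?thesis by simp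
qed

lemma proper_colouring_extend_at_vertex:
  assumes pr: "proper_colouring id E col" and bd: "\<forall>f\<in>E. col f < 4"
    and w: "\<forall>f\<in>E. w \<notin> f" "w \<notin> N" and c: "inj_on c N" "\<forall>x\<in>N. c x \<in> missing E col x"
  shows "\<exists>col'. proper_colouring id (E \<union> (\<lambda>x. {w, x}) ` N) col' \<and>
    (\<forall>f\<in>E \<union> (\<lambda>x. {w, x}) ` N. col' f < 4)"
proof -
  define col' where "col' f = (if w \<in> f then c (the_elem (f - {w})) else col f)" for f
  have star: "col' {w, x} = c x" if "x \<in> N" for x
    using that w(2) by (auto simp: col'_def insert_Diff_if)
  have old: "col' f = col f" if "f \<in> E" for f using that w(1) by (simp add: col'_def)
  have star_old: "col' {w, x} \<noteq> col' f" if "x \<in> N" "f \<in> E" "{w, x} \<inter> f \<noteq> {}" for x f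
  proof -
    have "x \<in> f" using that w(1) by blast
    then have "col f \<noteq> c x" using c(2) that(1,2) unfolding missing_def by blast
    then show ?thesis using star old that by simp
  qed
  have "proper_colouring id (E \<union> (\<lambda>x. {w, x}) ` N) col'"
    unfolding proper_colouring_def
  proof (intro ballI impI)
    fix e f assume e: "e \<in> E \<union> (\<lambda>x. {w, x}) ` N" and f: "f \<in> E \<union> (\<lambda>x. {w, x}) ` N"
      and ef: "adjacent id e f"
    then have meet: "e \<inter> f \<noteq> {}" "e \<noteq> f" by (auto simp: adjacent_def)
    from e f consider "e \<in> E" "f \<in> E" | x where "x \<in> N" "e = {w, x}" "f \<in> E"
      | y where "e \<in> E" "y \<in> N" "f = {w, y}" | x y where "x \<in> N" "y \<in> N" "e = {w, x}" "f = {w, y}"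
      by blast
    then show "col' e \<noteq> col' f"
    proof cases
      case 1
      then show ?thesis using pr ef old by (simp add: proper_colouring_def)
    next
      case (2 x)
      then show ?thesis using star_old meet by simp
    next
      case (3 y)
      then show ?thesis using star_old[of y e] meet by (simp add: Int_commute)
    next
      case (4 x y)
      then show ?thesis using star c(1) meet(2) by (auto simp: inj_on_def)
    qed
  qed
  moreover have "\<forall>f\<in>E \<union> (\<lambda>x. {w, x}) ` N. col' f < 4" using bd c(2) star old by (auto simp: missing_def)
  ultimately show ?thesis by blast
qed

text \<open>If three vertices all miss the same two colours \<open>a, b\<close>, each of them has an edge of a third
  colour \<open>c\<close>. These edges are ends of \<open>a\<close>/\<open>c\<close>-chains, and a chain has only two ends, so
  swapping the chain through the \<open>c\<close>-edge at \<open>x1\<close> frees \<open>c\<close> at \<open>x1\<close> but not at some other vertex.\<close>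

lemma kempe_recolouring_separates_missing:
  assumes fin: "finite E" and two: "\<forall>f\<in>E. card f = 2"
    and pr: "proper_colouring id E col" and bd: "\<forall>f\<in>E. col f < 4"
    and N: "card N = 3" "x1 \<in> N" and T: "\<forall>x\<in>N. missing E col x = T" "card T = 2"
  obtains col' where "proper_colouring id E col'" "\<forall>f\<in>E. col' f < 4"
    "\<exists>x\<in>N. missing E col' x \<noteq> missing E col' x1"
proof -
  obtain a b where ab: "T = {a, b}" "a \<noteq> b" using T(2) by (auto simp: card_2_iff)
  then have "a < 4" "b < 4" using T N(2) by (auto simp: missing_def)
  then have "card ({..<4::nat} - {a, b}) = 2" using ab(2) by simp
  then have "{..<4::nat} - {a, b} \<noteq> {}" by (metis card.empty zero_neq_numeral)
  then obtain c where c: "c < 4" "c \<noteq> a" "c \<noteq> b" by blast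
  have "\<exists>f\<in>E. x \<in> f \<and> col f = c" if "x \<in> N" for x
    using T(1) ab(1) c that by (auto simp: missing_def)
  then obtain e where e: "\<And>x. x \<in> N \<Longrightarrow> e x \<in> E \<and> x \<in> e x \<and> col (e x) = c" by metis
  have no_a: "\<forall>f\<in>E. x \<in> f \<longrightarrow> col f \<noteq> a" if "x \<in> N" for x
    using T(1) ab(1) that unfolding missing_def by blast
  define K where "K = kempe_chain id E col a c (e x1)"
  have i0: "e x1 \<in> E" "col (e x1) \<in> {a, c}" using e[OF N(2)] by auto
  have KS: "K \<subseteq> {f\<in>E. col f \<in> {a, c}}" unfolding K_def using kempe_chain_subset[of "e x1" E col a c] i0 .
  have "finite f" if "f \<in> K" for f using that KS two card.infinite[of f] by fastforce
  then have "finite (pendant id K)" using finite_subset[OF KS] fin by (intro finite_pendant) auto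
  then have "N \<subseteq> pendant id K \<Longrightarrow> card N \<le> card (pendant id K)" by (rule card_mono)
  moreover have "card (pendant id K) \<le> 2"
    unfolding K_def using two fin pr i0 by (intro card_pendant_kempe_chain_le_2) auto
  moreover have "x \<in> pendant id K" if "x \<in> N" "e x \<in> K" for x
    using mem_pendant_kempe_chain[OF pr i0, of "e x" x] e[OF that(1)] no_a[OF that(1)] that(2)
    unfolding K_def by simp
  ultimately obtain x where x: "x \<in> N" "e x \<notin> K" using N(1) by fastforce
  define col' where "col' = kempe_swap col K a c"
  have "proper_colouring id E col'" unfolding col'_def K_def by (rule proper_colouring_kempe_swap[OF pr i0])
  moreover have "\<forall>f\<in>E. col' f < 4" using bd c(1) \<open>a < 4\<close> by (simp add: col'_def kempe_swap_less)
  moreover have "col' f \<noteq> c" if "f \<in> E" "x1 \<in> f" for f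
  proof (cases "f \<in> K")
    case True
    then show ?thesis using KS no_a[OF N(2)] that c by (auto simp: col'_def kempe_swap_def swap_colours_def)
  next
    case False
    then have "f \<noteq> e x1" using kempe_chain_self K_def by metis
    then have "col f \<noteq> c"
      using pr that e[OF N(2)] by (auto simp: proper_colouring_def adjacent_def)
    then show ?thesis using False by (simp add: col'_def kempe_swap_def)
  qed
  then have "c \<in> missing E col' x1" using c(1) by (simp add: missing_def)
  moreover have "c \<notin> missing E col' x" using x e[OF x(1)] by (auto simp: missing_def col'_def kempe_swap_def)
  ultimately show ?thesis using that x(1) by blast
qed

lemma exists_colouring_with_distinct_missing:
  assumes fin: "finite E" and two: "\<forall>f\<in>E. card f = 2"
    and pr: "proper_colouring id E col" and bd: "\<forall>f\<in>E. col f < 4"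
    and N: "finite N" "card N \<le> 3" and deg: "\<forall>x\<in>N. card {f\<in>E. x \<in> f} \<le> 2"
  obtains col' c where "proper_colouring id E col'" "\<forall>f\<in>E. col' f < 4"
    "inj_on c N" "\<forall>x\<in>N. c x \<in> missing E col' x"
proof -
  let ?bad = "\<lambda>col. card N = 3 \<and> (\<forall>x\<in>N. \<forall>y\<in>N. missing E col x = missing E col y)
    \<and> (\<forall>x\<in>N. card (missing E col x) = 2)"
  have choice: "\<exists>c. inj_on c N \<and> (\<forall>x\<in>N. c x \<in> missing E col' x)" if "\<not> ?bad col'" for col'
  proof -
    have "finite (missing E col' x) \<and> 2 \<le> card (missing E col' x)" if "x \<in> N" for x
      using finite_missing card_missing_ge_2[OF fin] deg that by simp
    then show ?thesis using that by (rule exists_inj_choice_three[OF N])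
  qed
  show ?thesis
  proof (cases "?bad col")
    case True
    then have "card N = 3" by blast
    then obtain x1 where "x1 \<in> N" by (metis card.empty ex_in_conv zero_neq_numeral)
    have "\<forall>x\<in>N. missing E col x = missing E col x1" "card (missing E col x1) = 2"
      using True \<open>x1 \<in> N\<close> by blast+
    then obtain col' where col': "proper_colouring id E col'" "\<forall>f\<in>E. col' f < 4"
        "\<exists>x\<in>N. missing E col' x \<noteq> missing E col' x1"
      by (rule kempe_recolouring_separates_missing[OF fin two pr bd \<open>card N = 3\<close> \<open>x1 \<in> N\<close>])
    then have "\<not> ?bad col'" using \<open>x1 \<in> N\<close> by blast
    then show ?thesis using choice col'(1,2) that by blast
  qed (use choice that pr bd in blast)
qed

lemma edges_at_vertex:
  assumes "finite E" and two: "\<forall>e\<in>E. card e = 2"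
  shows "{e\<in>E. w \<in> e} = (\<lambda>x. {w, x}) ` {x. adj E w x}" and "w \<notin> {x. adj E w x}"
    and "finite {x. adj E w x}" and "card {x. adj E w x} = card {e\<in>E. w \<in> e}"
proof -
  have "e \<in> (\<lambda>x. {w, x}) ` {x. adj E w x}" if e: "e \<in> E" "w \<in> e" for e
  proof -
    obtain x y where "e = {x, y}" using two e(1) by (auto simp: card_2_iff)
    then have "e = {w, if w = x then y else x}" using e(2) by auto
    then show ?thesis using e(1) by (auto simp: adj_def)
  qed
  then show star: "{e\<in>E. w \<in> e} = (\<lambda>x. {w, x}) ` {x. adj E w x}" by (auto simp: adj_def)
  show "w \<notin> {x. adj E w x}" using two by (force simp: adj_def)
  then have inj: "inj_on (\<lambda>x. {w, x}) {x. adj E w x}" by (auto simp: inj_on_def doubleton_eq_iff)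
  have "finite ((\<lambda>x. {w, x}) ` {x. adj E w x})" unfolding star[symmetric] using assms(1) by simp
  then show "finite {x. adj E w x}" using finite_imageD[OF _ inj] by blast
  show "card {x. adj E w x} = card {e\<in>E. w \<in> e}" unfolding star card_image[OF inj] ..
qed

text \<open>The case \<open>\<Delta> = 3\<close> of Vizing's theorem, by induction: delete a vertex \<open>w\<close>, colour the rest,
  and give the edges \<open>{w, x}\<close> distinct colours missing at their other ends.\<close>

theorem exists_4_edge_colouring:
  assumes "finite E" and "\<forall>e\<in>E. card e = 2" and "\<forall>v. card {e\<in>E. v \<in> e} \<le> 3"
  shows "\<exists>col. proper_colouring id E col \<and> (\<forall>e\<in>E. col e < 4)"
  using assms
proof (induction E rule: finite_psubset_induct)
  case (psubset E)
  note two = psubset.prems(1) and deg = psubset.prems(2)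
  show ?case
  proof (cases "E = {}")
    case False
    then obtain e0 w where e0: "e0 \<in> E" "w \<in> e0" using two by (metis all_not_in_conv card.empty zero_neq_numeral)
    define E' where "E' = {e\<in>E. w \<notin> e}"
    define N where "N = {x. adj E w x}"
    note star = edges_at_vertex[OF psubset.hyps(1) two, of w, folded N_def]
    have E: "E = E' \<union> (\<lambda>x. {w, x}) ` N" using star(1) by (auto simp: E'_def)
    have "card N \<le> 3" using star(4) deg by simp
    have E'_deg: "card {f\<in>E'. v \<in> f} \<le> card {f\<in>E. v \<in> f}" for v
      using psubset.hyps(1) by (intro card_mono) (auto simp: E'_def)
    have N_deg: "\<forall>x\<in>N. card {f\<in>E'. x \<in> f} \<le> 2"
    proof
      fix x assume "x \<in> N"
      have "{f\<in>E'. x \<in> f} \<subseteq> {f\<in>E. x \<in> f} - {{w, x}}" by (auto simp: E'_def)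
      then have "card {f\<in>E'. x \<in> f} \<le> card ({f\<in>E. x \<in> f} - {{w, x}})"
        using psubset.hyps(1) by (intro card_mono) auto
      also have "\<dots> = card {f\<in>E. x \<in> f} - 1" using \<open>x \<in> N\<close> psubset.hyps(1) by (simp add: N_def adj_def)
      finally show "card {f\<in>E'. x \<in> f} \<le> 2" using deg[rule_format, of x] by linarith
    qed
    have "E' \<subset> E" "\<forall>f\<in>E'. card f = 2" using e0 two by (auto simp: E'_def)
    moreover have "\<forall>v. card {f\<in>E'. v \<in> f} \<le> 3" using E'_deg deg le_trans by blast
    ultimately obtain col where col: "proper_colouring id E' col" "\<forall>f\<in>E'. col f < 4"
      using psubset.IH by blast
    have "finite E'" using psubset.hyps(1) by (simp add: E'_def)
    obtain col' c where col': "proper_colouring id E' col'" "\<forall>f\<in>E'. col' f < 4"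
        and c: "inj_on c N" "\<forall>x\<in>N. c x \<in> missing E' col' x"
      by (rule exists_colouring_with_distinct_missing[OF \<open>finite E'\<close> \<open>\<forall>f\<in>E'. card f = 2\<close> col
            star(3) \<open>card N \<le> 3\<close> N_deg])
    have "\<forall>f\<in>E'. w \<notin> f" by (simp add: E'_def)
    then show ?thesis unfolding E by (rule proper_colouring_extend_at_vertex[OF col' _ star(2) c])
  qed (simp add: proper_colouring_def)
qed

section \<open>Covering by \<open>m\<close>-matchings\<close>

lemma exists_colouring_with_equal_classes:
  assumes "finite X" "\<And>i. i \<in> X \<Longrightarrow> card (en i) = 2"
    and "proper_colouring en X col" "\<forall>i\<in>X. col i < q" "card X = q * m"
  obtains col' where "proper_colouring en X col'" "\<forall>i\<in>X. col' i < q"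
    "\<And>c. c < q \<Longrightarrow> card {i\<in>X. col' i = c} = m"
proof -
  obtain col' where col': "proper_colouring en X col'" "\<forall>i\<in>X. col' i < q"
      and le: "\<forall>c<q. card {i\<in>X. col' i = c} \<le> m"
    using exists_colouring_with_small_classes[OF assms(1,2) _ assms(3,4)] assms(5) by (metis order_refl)
  have "card {i\<in>X. col' i = c} = m" if "c < q" for c
  proof (rule ccontr)
    assume "card {i\<in>X. col' i = c} \<noteq> m"
    then have "(\<Sum>c<q. card {i\<in>X. col' i = c}) < (\<Sum>c<q. m)"
      using le that by (intro sum_strict_mono_ex1) (auto simp: order.strict_iff_order)
    then show False using sum_card_colour_classes[OF assms(1) col'(2)] assms(5) by simp
  qed
  then show ?thesis using that col' by blast
qed

lemma exists_large_colour_class: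
  fixes col :: "'i \<Rightarrow> nat"
  assumes "finite X" "\<forall>i\<in>X. col i < q" "0 < q"
  shows "\<exists>c<q. card X \<le> q * card {i\<in>X. col i = c}"
proof (rule ccontr)
  assume "\<not> ?thesis"
  then have "(\<Sum>c<q. q * card {i\<in>X. col i = c}) < (\<Sum>c<q. card X)"
    using assms(3) by (intro sum_strict_mono) (auto simp: not_le)
  then show False using sum_card_colour_classes[OF assms(1,2)] by (simp add: sum_distrib_left[symmetric])
qed

text \<open>The copies \<open>(e, True)\<close> of edges from one colour class form a matching, so they can all
  receive one new colour.\<close>

lemma proper_colouring_with_copies:
  assumes pr: "proper_colouring id E col" and bd: "\<forall>e\<in>E. col e < 4" and D: "D \<subseteq> {e\<in>E. col e = c0}"
  shows "proper_colouring fst (E \<times> {False} \<union> D \<times> {True}) (\<lambda>(e, copy). if copy then 4 else col e)"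
  unfolding proper_colouring_def
proof (intro ballI impI)
  fix i j assume i: "i \<in> E \<times> {False} \<union> D \<times> {True}" and j: "j \<in> E \<times> {False} \<union> D \<times> {True}"
    and ij: "adjacent fst i j"
  obtain e copy f copy' where ef: "i = (e, copy)" "j = (f, copy')" by fastforce
  have "e \<in> E" "f \<in> E" using i j D ef by auto
  have "col e \<noteq> col f" if "e \<noteq> f"
    using pr ij that \<open>e \<in> E\<close> \<open>f \<in> E\<close> ef by (simp add: proper_colouring_def adjacent_def)
  then show "(\<lambda>(e, copy). if copy then 4 else col e) i \<noteq> (\<lambda>(e, copy). if copy then 4 else col e) j"
    using i j ij D bd \<open>e \<in> E\<close> \<open>f \<in> E\<close> ef by (cases copy; cases copy') (auto simp: adjacent_def)
qed

lemma m_matching_colour_class: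
  assumes "proper_colouring fst X col" "fst ` X \<subseteq> E" "\<forall>i\<in>X. fst i \<noteq> {}"
    and "card {i\<in>X. col i = c} = m"
  shows "m_matching E m (fst ` {i\<in>X. col i = c})"
proof -
  have independent: "\<not> adjacent fst i j" if "i \<in> X" "j \<in> X" "col i = c" "col j = c" for i j
    using assms(1) that unfolding proper_colouring_def by metis
  \<comment> \<open>two copies of the same edge are adjacent, hence never in one colour class\<close>
  have "inj_on fst {i\<in>X. col i = c}"
  proof (rule inj_onI)
    fix i j assume "i \<in> {i\<in>X. col i = c}" "j \<in> {i\<in>X. col i = c}" "fst i = fst j"
    then show "i = j" using independent[of i j] assms(3) by (auto simp: adjacent_def)
  qed
  then have "card (fst ` {i\<in>X. col i = c}) = m" using assms(4) by (simp add: card_image)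
  moreover have "matching E (fst ` {i\<in>X. col i = c})"
    unfolding matching_def
  proof (intro conjI ballI impI)
    show "fst ` {i\<in>X. col i = c} \<subseteq> E" using assms(2) by auto
    fix e f assume "e \<in> fst ` {i\<in>X. col i = c}" "f \<in> fst ` {i\<in>X. col i = c}" "e \<noteq> f"
    then obtain i j where "i \<in> X" "j \<in> X" "col i = c" "col j = c" "e = fst i" "f = fst j" by blast
    then show "e \<inter> f = {}" using independent[of i j] \<open>e \<noteq> f\<close> by (auto simp: adjacent_def)
  qed
  ultimately show ?thesis by (simp add: m_matching_def)
qed

lemma exists_cover_by_m_matchings:
  assumes fin: "finite E" and two: "\<forall>e\<in>E. card e = 2" and deg: "\<forall>v. card {e\<in>E. v \<in> e} \<le> 3"
    and "4 * m < card E" "card E \<le> q * m" "q * m < card E + m"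
  shows "\<exists>F. finite F \<and> card F \<le> q \<and> (\<forall>M\<in>F. m_matching E m M) \<and> \<Union>F = E"
proof -
  obtain col where pr: "proper_colouring id E col" and bd: "\<forall>e\<in>E. col e < 4"
    using exists_4_edge_colouring[OF fin two deg] by blast
  obtain c0 where "card E \<le> 4 * card {e\<in>E. col e = c0}"
    using exists_large_colour_class[OF fin bd] by auto
  then have "q * m - card E \<le> card {e\<in>E. col e = c0}" using assms(4,6) by linarith
  then obtain D where D: "D \<subseteq> {e\<in>E. col e = c0}" "card D = q * m - card E"
    by (meson obtain_subset_with_card_n)
  define X where "X = E \<times> {False} \<union> D \<times> {True}"
  have "finite D" using finite_subset[OF D(1)] fin by simp
  then have finX: "finite X" using fin by (simp add: X_def)
  have "card X = card (E \<times> {False}) + card (D \<times> {True})"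
    unfolding X_def using finX by (intro card_Un_disjoint) (auto simp: X_def)
  then have cardX: "card X = q * m" using D(2) assms(5) by (simp add: card_cartesian_product)
  have fstX: "fst ` X = E" unfolding X_def image_Un using D(1) by auto
  have "4 * m < q * m" using assms(4,5) by linarith
  then have "4 < q" by (simp add: mult_less_cancel2)
  then have "\<forall>i\<in>X. (\<lambda>(e, copy). if copy then 4 else col e) i < q" using bd D(1) by (auto simp: X_def)
  moreover have twoX: "card (fst i) = 2" if "i \<in> X" for i using two fstX that by blast
  ultimately obtain col' where col': "proper_colouring fst X col'" "\<forall>i\<in>X. col' i < q"
      "\<And>c. c < q \<Longrightarrow> card {i\<in>X. col' i = c} = m"
    using exists_colouring_with_equal_classes[OF finX _ proper_colouring_with_copies[OF pr bd D(1),
        folded X_def] _ cardX] by blast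
  define F where "F = (\<lambda>c. fst ` {i\<in>X. col' i = c}) ` {..<q}"
  have "\<forall>i\<in>X. fst i \<noteq> {}" using twoX by fastforce
  then have "\<forall>M\<in>F. m_matching E m M"
    unfolding F_def using m_matching_colour_class[OF col'(1) _ _ col'(3)] fstX by blast
  moreover have "\<Union>F = E" using col'(2) fstX by (auto simp: F_def)
  moreover have "card F \<le> q" using card_image_le[of "{..<q}"] by (simp add: F_def)
  ultimately show ?thesis by (auto simp: F_def)
qed

lemma card_le_mult_if_m_matching_cover:
  assumes "\<forall>M\<in>F. m_matching E m M" "\<Union>F = E"
  shows "card E \<le> card F * m"
proof -
  have "card E \<le> sum card F" using card_Union_le_sum_card[of F] assms(2) by simp
  also have "\<dots> = card F * m" using assms(1) by (simp add: m_matching_def)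
  finally show ?thesis .
qed

lemma excessive_index_eqI:
  assumes cover: "finite F" "\<forall>M\<in>F. m_matching E m M" "\<Union>F = E"
    and minimal: "\<And>F'. finite F' \<Longrightarrow> \<forall>M\<in>F'. m_matching E m M \<Longrightarrow> \<Union>F' = E \<Longrightarrow> card F \<le> card F'"
  shows "excessive_index E m = enat (card F)"
proof -
  have "\<forall>e\<in>E. \<exists>M. m_matching E m M \<and> e \<in> M" using cover(2,3) by blast
  moreover have "(LEAST k. \<exists>F'. finite F' \<and> card F' = k \<and> (\<forall>M\<in>F'. m_matching E m M) \<and> \<Union>F' = E) = card F"
    using cover minimal by (intro Least_equality) blast+
  ultimately show ?thesis by (simp add: excessive_index_def)
qed

lemma cubic_graph_edges:
  assumes "simple_graph V E" "cubic V E"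
  shows "finite E" "\<forall>e\<in>E. card e = 2" "\<forall>v. card {e\<in>E. v \<in> e} \<le> 3" "2 * card E = 3 * card V"
proof -
  have "finite V" and sub: "\<forall>e\<in>E. e \<subseteq> V" and two: "\<forall>e\<in>E. card e = 2"
    using assms(1) by (auto simp: simple_graph_def)
  then show "finite E" by (meson Pow_iff finite_Pow_iff finite_subset subsetI)
  show "\<forall>e\<in>E. card e = 2" by (fact two)
  have outside: "{e\<in>E. v \<in> e} = {}" if "v \<notin> V" for v using sub that by blast
  have deg: "card {e\<in>E. v \<in> e} = (if v \<in> V then 3 else 0)" for v
    using assms(2) outside[of v] by (cases "v \<in> V") (auto simp: cubic_def degree_def simp del: Collect_empty_eq)
  then show "\<forall>v. card {e\<in>E. v \<in> e} \<le> 3" by simp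
  have "2 * card E = (\<Sum>e\<in>E. card e)" using two by simp
  also have "\<dots> = (\<Sum>v\<in>V. card {e\<in>E. v \<in> e})"
    using \<open>finite V\<close> \<open>finite E\<close> sub sum_card_endpoints_eq_sum_degree[of E V id] by simp
  also have "\<dots> = 3 * card V" using deg by simp
  finally show "2 * card E = 3 * card V" .
qed

lemma nat_ceiling_divide_bounds:
  fixes a m :: nat
  assumes "0 < m"
  shows "a \<le> nat \<lceil>real a / real m\<rceil> * m" and "nat \<lceil>real a / real m\<rceil> * m < a + m"
proof -
  let ?c = "\<lceil>real a / real m\<rceil>"
  have c: "real (nat ?c * m) = of_int ?c * real m" by simp
  have "real a / real m \<le> of_int ?c" by linarith
  then have "real a \<le> real (nat ?c * m)" unfolding c using assms by (metis pos_divide_le_eq of_nat_0_less_iff)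
  have "of_int ?c < real a / real m + 1" by linarith
  then have "real (nat ?c * m) < real a + real m" unfolding c using assms by (simp add: field_simps)
  with \<open>real a \<le> _\<close> show "a \<le> nat \<lceil>real a / real m\<rceil> * m" "nat \<lceil>real a / real m\<rceil> * m < a + m"
    by linarith+
qed

theorem proposition1:
  fixes V :: "'a set" and E :: "'a set set" and n m :: nat
  assumes "simple_graph V E" and "connected_graph V E" and "cubic V E"
    and "card V = 2 * n"
    and "0 < m"
    and "int m < \<lceil>(3 * real n) / 4\<rceil>"
  shows "excessive_index E m = enat (nat \<lceil>(3 * real n) / real m\<rceil>)"
proof -
  note G = cubic_graph_edges[OF assms(1,3)]
  define q where "q = nat \<lceil>(3 * real n) / real m\<rceil>"
  have cardE: "card E = 3 * n" using G(4) assms(4) by simp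
  have q: "card E \<le> q * m" "q * m < card E + m"
    using nat_ceiling_divide_bounds[OF assms(5), of "3 * n"] cardE by (simp_all add: q_def)
  have "real m < 3 * real n / 4" using assms(6) by (simp add: less_ceiling_iff)
  then have "4 * m < card E" using cardE by linarith
  then obtain F where F: "finite F" "card F \<le> q" "\<forall>M\<in>F. m_matching E m M" "\<Union>F = E"
    using exists_cover_by_m_matchings[OF G(1-3) _ q] by blast
  have lower: "q \<le> card F'" if "\<forall>M\<in>F'. m_matching E m M" "\<Union>F' = E" for F'
  proof -
    have "q * m < (card F' + 1) * m" using card_le_mult_if_m_matching_cover[OF that] q(2) by simp
    then have "q < card F' + 1" using mult_less_cancel2 by blast
    then show ?thesis by simp
  qed
  then have "card F = q" using F by (simp add: le_antisym)
  then show ?thesis using excessive_index_eqI[OF F(1,3,4)] lower F(2) unfolding q_def by fastforce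
qed

end
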